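(* Let $R$ be a UFD and $\mathfrak p$ a prime ideal of $R$ such that $R$ is complete with respect to some $\mathfrak p$-filtration of $R$. Let $f\in R[X]$ be $\mathfrak p$-distinguished (of some order) with $f_0\neq0$, and let $\Phi=(\Phi_0,\Phi_1,\dots,\Phi_l)$ be a prime factorization of $f$ in $R[X]$, indexed so that for $i>0$ the constant term $(\Phi_i)_0$ is a unit in $R$ if and only if $i>k$, where $k\ge0$. Let $u$ be the leading coefficient of $\Phi_1\cdots\Phi_k$. Then $(u^{-1},\Phi_1,\dots,\Phi_k)$ is a prime factorization of $P_f$ in $R[X]$. Moreover $U_f\in R[X]$, and $(u\Phi_0,\Phi_{k+1},\Phi_{k+2},\dots,\Phi_l)$ is a prime factorization of $U_f$ in $R[X]$.
   Context: A $\mathfrak p$-filtration is a descending sequence of ideals each containing a power of $\mathfrak p$; $R$ is complete with respect to it if $R\to\varprojlim R/\mathfrak f_i$ is an isomorphism. $f$ is $\mathfrak p$-distinguished of order $n$ if its coefficients $f_i$ lie in $\mathfrak p$ for $i<n$ and $f_n$ is a unit mod $\mathfrak p$; then $f=U_fP_f$ with $P_f\in R[X]$ the unique monic polynomial of degree $n$ with non-leading coefficients in $\mathfrak p$ and $U_f\in R[[X]]$ a unit. A prime factorization of an element $a$ of a ring $S$ is a sequence $(\pi_0,\pi_1,\dots,\pi_k)$ with $a=\pi_0\pi_1\cdots\pi_k$, $\pi_0$ a unit of $S$ and $\pi_i$ prime in $S$ for $i>0$. *)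

theory Defs
  imports "HOL-Computational_Algebra.Computational_Algebra"
begin

definition is_ideal :: "'a::comm_ring_1 set \<Rightarrow> bool" where
  "is_ideal I \<longleftrightarrow> 0 \<in> I \<and> (\<forall>x\<in>I. \<forall>y\<in>I. x + y \<in> I) \<and> (\<forall>x\<in>I. \<forall>r. r * x \<in> I)"

definition prime_ideal :: "'a::comm_ring_1 set \<Rightarrow> bool" where
  "prime_ideal P \<longleftrightarrow> is_ideal P \<and> P \<noteq> UNIV \<and> (\<forall>a b. a * b \<in> P \<longrightarrow> a \<in> P \<or> b \<in> P)"

definition ideal_span :: "'a::comm_ring_1 set \<Rightarrow> 'a set" where
  "ideal_span S = \<Inter>{J. is_ideal J \<and> S \<subseteq> J}"

definition ideal_pow :: "'a::comm_ring_1 set \<Rightarrow> nat \<Rightarrow> 'a set" where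
  "ideal_pow I n = ideal_span {prod_list xs | xs. length xs = n \<and> set xs \<subseteq> I}"

definition p_filtration :: "'a::comm_ring_1 set \<Rightarrow> (nat \<Rightarrow> 'a set) \<Rightarrow> bool" where
  "p_filtration P F \<longleftrightarrow> (\<forall>i. is_ideal (F i) \<and> F (Suc i) \<subseteq> F i \<and> (\<exists>m. ideal_pow P m \<subseteq> F i))"

text \<open>R -> lim R/F_i is bijective: injective (intersection is zero) and every
  compatible family (x_j = x_i mod F_i for j >= i) comes from an element of R.\<close>
definition complete_wrt :: "(nat \<Rightarrow> 'a::comm_ring_1 set) \<Rightarrow> bool" where
  "complete_wrt F \<longleftrightarrow>
     (\<forall>a. (\<forall>i. a \<in> F i) \<longrightarrow> a = 0) \<and>
     (\<forall>x::nat \<Rightarrow> 'a. (\<forall>i j. i \<le> j \<longrightarrow> x j - x i \<in> F i) \<longrightarrow> (\<exists>a. \<forall>i. a - x i \<in> F i))"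

definition unit_mod :: "'a::comm_ring_1 set \<Rightarrow> 'a \<Rightarrow> bool" where
  "unit_mod P a \<longleftrightarrow> (\<exists>b. a * b - 1 \<in> P)"

definition p_distinguished :: "'a::comm_ring_1 set \<Rightarrow> 'a poly \<Rightarrow> nat \<Rightarrow> bool" where
  "p_distinguished P f n \<longleftrightarrow> (\<forall>i<n. coeff f i \<in> P) \<and> unit_mod P (coeff f n)"

definition weierstrass_data :: "'a::comm_ring_1 set \<Rightarrow> 'a poly \<Rightarrow> nat \<Rightarrow> 'a poly \<Rightarrow> 'a fps \<Rightarrow> bool" where
  "weierstrass_data P f n Q U \<longleftrightarrow>
     fps_of_poly f = U * fps_of_poly Q \<and> lead_coeff Q = 1 \<and> degree Q = n \<and>
     (\<forall>i<n. coeff Q i \<in> P) \<and> (\<exists>V. U * V = 1)"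

text \<open>P_f and U_f (unique by the paper's Weierstrass preparation).\<close>
definition WP_P :: "'a::comm_ring_1 set \<Rightarrow> 'a poly \<Rightarrow> nat \<Rightarrow> 'a poly" where
  "WP_P P f n = (THE Q. \<exists>U. weierstrass_data P f n Q U)"

definition WP_U :: "'a::comm_ring_1 set \<Rightarrow> 'a poly \<Rightarrow> nat \<Rightarrow> 'a fps" where
  "WP_U P f n = (THE U. \<exists>Q. weierstrass_data P f n Q U)"

definition is_prime_factorization :: "'b::comm_semiring_1 \<Rightarrow> 'b list \<Rightarrow> bool" where
  "is_prime_factorization a xs \<longleftrightarrow>
     xs \<noteq> [] \<and> hd xs dvd 1 \<and> (\<forall>x\<in>set (tl xs). prime_elem x) \<and> a = prod_list xs"

end

theory Submission
  imports Defs
begin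

text \<open>
  Completeness makes every \<open>1 + p\<close> with \<open>p \<in> \<frak>p\<close> a unit and turns power series
  contractions for the \<open>\<frak>p\<close>-adic topology into maps with fixed points; this yields the
  Weierstrass preparation \<open>f = U\<^sub>f P\<^sub>f\<close> and its uniqueness.
  Write \<open>f = A B\<close> with \<open>A = \<Phi>\<^sub>1 \<cdots> \<Phi>\<^sub>k\<close> and \<open>B = \<Phi>\<^sub>0 \<Phi>\<^sub>k\<^sub>+\<^sub>1 \<cdots> \<Phi>\<^sub>l\<close>. As \<open>B\<close> has a unit
  constant term it is invertible in \<open>R[[X]]\<close>, so \<open>A = (B\<^sup>-\<^sup>1 U\<^sub>f) P\<^sub>f\<close>; dividing \<open>A\<close> by the monic
  \<open>P\<^sub>f\<close> in \<open>R[X]\<close> and using uniqueness of the remainder shows \<open>A = q P\<^sub>f\<close> with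
  \<open>q = B\<^sup>-\<^sup>1 U\<^sub>f\<close> a polynomial with unit constant term. No prime \<open>\<Phi>\<^sub>i\<close>, \<open>i \<le> k\<close>, can divide
  such a \<open>q\<close>, so \<open>q\<close> is a unit constant, necessarily \<open>u\<close>; hence \<open>P\<^sub>f = u\<^sup>-\<^sup>1 A\<close> and
  \<open>U\<^sub>f = u B\<close>.
\<close>

lemma is_ideal_0: "is_ideal I \<Longrightarrow> 0 \<in> I"
  unfolding is_ideal_def by auto

lemma is_ideal_add: "is_ideal I \<Longrightarrow> x \<in> I \<Longrightarrow> y \<in> I \<Longrightarrow> x + y \<in> I"
  unfolding is_ideal_def by auto

lemma is_ideal_mult_left: "is_ideal I \<Longrightarrow> x \<in> I \<Longrightarrow> r * x \<in> I"
  unfolding is_ideal_def by auto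

lemma is_ideal_mult_right: "is_ideal I \<Longrightarrow> x \<in> I \<Longrightarrow> x * r \<in> I"
  using is_ideal_mult_left[of I x r] by (simp add: mult.commute)

lemma is_ideal_uminus: "is_ideal I \<Longrightarrow> x \<in> I \<Longrightarrow> - x \<in> I"
  using is_ideal_mult_left[of I x "-1"] by simp

lemma is_ideal_sum: "is_ideal I \<Longrightarrow> (\<And>i. i \<in> A \<Longrightarrow> g i \<in> I) \<Longrightarrow> sum g A \<in> I"
  by (induction A rule: infinite_finite_induct) (simp_all add: is_ideal_0 is_ideal_add)

lemma is_ideal_ideal_span: "is_ideal (ideal_span S)"
  unfolding ideal_span_def is_ideal_def by auto

lemma ideal_span_superset: "S \<subseteq> ideal_span S"
  unfolding ideal_span_def by auto

lemma ideal_span_least: "is_ideal J \<Longrightarrow> S \<subseteq> J \<Longrightarrow> ideal_span S \<subseteq> J"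
  unfolding ideal_span_def by auto

lemma is_ideal_ideal_pow: "is_ideal (ideal_pow I m)"
  unfolding ideal_pow_def by (rule is_ideal_ideal_span)

lemma prod_list_in_ideal_pow: "length xs = m \<Longrightarrow> set xs \<subseteq> I \<Longrightarrow> prod_list xs \<in> ideal_pow I m"
  unfolding ideal_pow_def by (rule subsetD[OF ideal_span_superset]) blast

lemma power_in_ideal_pow: "x \<in> I \<Longrightarrow> x ^ m \<in> ideal_pow I m"
  using prod_list_in_ideal_pow[of "replicate m x" m I] by (simp add: prod_list_replicate set_replicate_conv_if)

lemma ideal_pow_0 [simp]: "ideal_pow I 0 = UNIV"
  using is_ideal_mult_right[OF is_ideal_ideal_pow prod_list_in_ideal_pow[of "[]" 0 I]] by auto

lemma mult_in_ideal_pow_Suc: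
  assumes "x \<in> I" and "y \<in> ideal_pow I m"
  shows "x * y \<in> ideal_pow I (Suc m)"
proof -
  let ?J = "{y. \<forall>x\<in>I. x * y \<in> ideal_pow I (Suc m)}"
  have "is_ideal ?J"
    using is_ideal_ideal_pow[of I "Suc m"]
    unfolding is_ideal_def by (simp add: distrib_left mult.left_commute)
  moreover have "{prod_list xs | xs. length xs = m \<and> set xs \<subseteq> I} \<subseteq> ?J"
    using prod_list_in_ideal_pow[of "_ # _" "Suc m" I] by auto
  ultimately have "ideal_pow I m \<subseteq> ?J"
    unfolding ideal_pow_def[of I m] by (rule ideal_span_least)
  with assms show ?thesis by blast
qed

lemma ideal_pow_Suc_subset: "ideal_pow I (Suc m) \<subseteq> ideal_pow I m"
  unfolding ideal_pow_def[of I "Suc m"]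
proof (rule ideal_span_least[OF is_ideal_ideal_pow], safe)
  fix xs :: "'a list" assume "length xs = Suc m" "set xs \<subseteq> I"
  then obtain x ys where "xs = x # ys" "length ys = m" "set ys \<subseteq> I" by (cases xs) auto
  then show "prod_list xs \<in> ideal_pow I m"
    using is_ideal_mult_left[OF is_ideal_ideal_pow prod_list_in_ideal_pow] by simp
qed

lemma ideal_pow_antimono: "m \<le> m' \<Longrightarrow> ideal_pow I m' \<subseteq> ideal_pow I m"
  by (rule lift_Suc_antimono_le[of "ideal_pow I"]) (simp_all add: ideal_pow_Suc_subset)

lemma telescoping_diff_in_ideal_pow:
  assumes step: "\<And>m. x (Suc m) - x m \<in> ideal_pow I m" and "m \<le> m'"
  shows "x m' - x m \<in> ideal_pow I m"
  using \<open>m \<le> m'\<close>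
proof (induction m' rule: dec_induct)
  case base
  show ?case by (simp add: is_ideal_0[OF is_ideal_ideal_pow])
next
  case (step m')
  have "x (Suc m') - x m' \<in> ideal_pow I m"
    using assms(1)[of m'] ideal_pow_antimono[OF step.hyps(1)] by blast
  from is_ideal_add[OF is_ideal_ideal_pow this step.IH] show ?case by simp
qed

section \<open>Power series with coefficients in an ideal\<close>

definition fps_coeffs_in :: "'a set \<Rightarrow> 'a fps \<Rightarrow> bool" where
  "fps_coeffs_in I W \<longleftrightarrow> (\<forall>j. W $ j \<in> I)"

lemma fps_coeffs_in_mult_left:
  fixes W :: "'a::comm_ring_1 fps"
  assumes "is_ideal I" "fps_coeffs_in I W"
  shows "fps_coeffs_in I (Y * W)"
  using assms unfolding fps_coeffs_in_def fps_mult_nth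
  by (blast intro: is_ideal_sum is_ideal_mult_left)

lemma fps_coeffs_in_mult_ideal_pow_Suc:
  fixes W :: "'a::comm_ring_1 fps"
  assumes "fps_coeffs_in I L" "fps_coeffs_in (ideal_pow I m) W"
  shows "fps_coeffs_in (ideal_pow I (Suc m)) (L * W)"
  using assms unfolding fps_coeffs_in_def fps_mult_nth
  by (blast intro: is_ideal_sum[OF is_ideal_ideal_pow] mult_in_ideal_pow_Suc)

lemma fps_coeffs_in_add:
  "is_ideal I \<Longrightarrow> fps_coeffs_in I V \<Longrightarrow> fps_coeffs_in I W \<Longrightarrow> fps_coeffs_in I (V + W)"
  unfolding fps_coeffs_in_def by (simp add: is_ideal_add)

lemma fps_coeffs_in_uminus: "is_ideal I \<Longrightarrow> fps_coeffs_in I W \<Longrightarrow> fps_coeffs_in I (- W)"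
  unfolding fps_coeffs_in_def by (simp add: is_ideal_uminus)

lemma fps_coeffs_in_shift: "fps_coeffs_in I W \<Longrightarrow> fps_coeffs_in I (fps_shift n W)"
  unfolding fps_coeffs_in_def by simp

lemma fps_is_unit_iff_nth_0: "(G :: 'a::comm_ring_1 fps) dvd 1 \<longleftrightarrow> G $ 0 dvd 1"
proof
  assume "G dvd 1"
  then obtain H where "1 = G * H" by (rule dvdE)
  then have "1 = G $ 0 * H $ 0" by (metis fps_mult_nth_0 fps_one_nth)
  then show "G $ 0 dvd 1" by (rule dvdI)
next
  assume "G $ 0 dvd 1"
  then obtain y where "1 = G $ 0 * y" by (rule dvdE)
  then have "G * fps_right_inverse G y = 1" by (intro fps_right_inverse) simp
  then show "G dvd 1" by (metis dvdI)
qed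

lemma fps_of_poly_eq_0_iff [simp]: "fps_of_poly p = 0 \<longleftrightarrow> p = 0"
  using fps_of_poly_eq_iff[of p 0] by simp

definition weierstrass_poly :: "'a::comm_ring_1 set \<Rightarrow> nat \<Rightarrow> 'a poly \<Rightarrow> bool" where
  "weierstrass_poly P n Q \<longleftrightarrow> lead_coeff Q = 1 \<and> degree Q = n \<and> (\<forall>i<n. coeff Q i \<in> P)"

lemma weierstrass_data_iff:
  "weierstrass_data P f n Q U \<longleftrightarrow>
     fps_of_poly f = U * fps_of_poly Q \<and> weierstrass_poly P n Q \<and> U dvd 1"
  unfolding weierstrass_data_def weierstrass_poly_def by (auto simp: dvd_def mult.commute)

lemma fps_eq_weierstrass_poly:
  fixes G :: "'a::comm_ring_1 fps"
  assumes low: "\<And>j. j < n \<Longrightarrow> G $ j \<in> P"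
    and high: "\<And>j. n \<le> j \<Longrightarrow> G $ j = (if j = n then 1 else 0)"
  shows "fps_of_poly (truncate_fps (Suc n) G) = G"
    and "weierstrass_poly P n (truncate_fps (Suc n) G)"
proof -
  show "fps_of_poly (truncate_fps (Suc n) G) = G"
    by (rule fps_ext) (simp add: high)
  have "degree (truncate_fps (Suc n) G) = n"
    using degree_truncate_fps[of "Suc n" G] le_degree[of "truncate_fps (Suc n) G" n]
    by (simp add: coeff_truncate_fps high)
  then show "weierstrass_poly P n (truncate_fps (Suc n) G)"
    unfolding weierstrass_poly_def by (simp add: coeff_truncate_fps high low)
qed

section \<open>Rings complete with respect to a \<open>\<frak>p\<close>-filtration\<close>

locale complete_filtration =
  fixes P :: "'a::comm_ring_1 set" and F :: "nat \<Rightarrow> 'a set"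
  assumes ideal: "is_ideal P"
    and filtration: "p_filtration P F"
    and complete: "complete_wrt F"
begin

lemma is_ideal_F: "is_ideal (F i)"
  using filtration unfolding p_filtration_def by blast

lemma ideal_pow_subset_F: obtains m where "ideal_pow P m \<subseteq> F i"
  using filtration unfolding p_filtration_def by blast

lemma eq_0_if_in_F: "(\<And>i. a \<in> F i) \<Longrightarrow> a = 0"
  using complete unfolding complete_wrt_def by blast

lemma eq_0_if_in_ideal_pows: "(\<And>m. a \<in> ideal_pow P m) \<Longrightarrow> a = 0"
  by (metis eq_0_if_in_F ideal_pow_subset_F subsetD)

lemma limit_exists:
  assumes step: "\<And>m. x (Suc m) - x m \<in> ideal_pow P m"
  shows "\<exists>a. \<forall>i m. ideal_pow P m \<subseteq> F i \<longrightarrow> a - x m \<in> F i"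
proof -
  obtain M where M: "\<And>i. ideal_pow P (M i) \<subseteq> F i"
    using filtration unfolding p_filtration_def by metis
  \<comment> \<open>\<open>x \<circ> N\<close> is a compatible family for the filtration, with \<open>N\<close> increasing.\<close>
  define N where "N i = (\<Sum>t\<le>i. M t)" for i
  have "M i \<le> N i" for i
    unfolding N_def by (rule member_le_sum) auto
  then have N_F: "ideal_pow P (N i) \<subseteq> F i" for i
    using ideal_pow_antimono M by (blast intro: order_trans)
  have "x (N j) - x (N i) \<in> F i" if "i \<le> j" for i j
  proof -
    have "N i \<le> N j" using that unfolding N_def by (intro sum_mono2) auto
    then show ?thesis using telescoping_diff_in_ideal_pow[OF step] N_F by blast
  qed
  then obtain a where a: "\<And>i. a - x (N i) \<in> F i"
    using complete[unfolded complete_wrt_def, THEN conjunct2, rule_format, of "\<lambda>i. x (N i)"]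
    by blast
  show ?thesis
  proof (intro exI allI impI)
    fix i m assume m: "ideal_pow P m \<subseteq> F i"
    have "x (N i) - x m \<in> F i"
    proof (cases "m \<le> N i")
      case True
      then show ?thesis using telescoping_diff_in_ideal_pow[OF step] m by blast
    next
      case False
      then have "x m - x (N i) \<in> F i"
        using telescoping_diff_in_ideal_pow[OF step, of "N i" m] N_F by auto
      from is_ideal_uminus[OF is_ideal_F this] show ?thesis by simp
    qed
    from is_ideal_add[OF is_ideal_F a this] show "a - x m \<in> F i" by simp
  qed
qed

lemma is_unit_one_plus:
  assumes "p \<in> P"
  shows "(1 + p) dvd 1"
proof -
  define x where "x m = (\<Sum>t<m. (- p) ^ t)" for m
  have power: "(- p) ^ m \<in> ideal_pow P m" for m
    by (rule power_in_ideal_pow) (simp add: assms is_ideal_uminus[OF ideal])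
  then have step: "x (Suc m) - x m \<in> ideal_pow P m" for m
    by (simp add: x_def)
  obtain a where a: "\<And>i m. ideal_pow P m \<subseteq> F i \<Longrightarrow> a - x m \<in> F i"
    using limit_exists[OF step] by blast
  have "a * (1 + p) - 1 = 0"
  proof (rule eq_0_if_in_F)
    fix i
    obtain m where m: "ideal_pow P m \<subseteq> F i" by (rule ideal_pow_subset_F)
    have "x m * (1 + p) = 1 - (- p) ^ m"
      unfolding x_def one_diff_power_eq by (simp add: mult.commute)
    then have "a * (1 + p) - 1 = (a - x m) * (1 + p) + - ((- p) ^ m)"
      by (simp add: algebra_simps)
    also have "\<dots> \<in> F i"
      using m power[of m] a[OF m]
      by (blast intro: is_ideal_add is_ideal_F is_ideal_mult_right is_ideal_uminus)
    finally show "a * (1 + p) - 1 \<in> F i" .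
  qed
  then show ?thesis by (metis dvdI eq_iff_diff_eq_0 mult.commute)
qed

lemma is_unit_if_unit_mod: "unit_mod P a \<Longrightarrow> a dvd 1"
  unfolding unit_mod_def using is_unit_one_plus by (metis add.commute diff_add_cancel dvd_mult_left)

text \<open>\<open>Q \<equiv> X\<^sup>n\<close> modulo \<open>\<frak>p\<close>, so comparing coefficients from \<open>X\<^sup>n\<close> on
  expresses \<open>W\<close> through \<open>(Q - X\<^sup>n) W\<close>, which gains one more factor from \<open>\<frak>p\<close>.\<close>
lemma fps_eq_0_if_mult_vanishes_from_degree:
  assumes Q: "weierstrass_poly P n Q" and high: "\<And>j. n \<le> j \<Longrightarrow> (W * fps_of_poly Q) $ j = 0"
  shows "W = 0"
proof -
  define L where "L = fps_of_poly Q - fps_X ^ n"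
  have L: "fps_coeffs_in P L"
    using Q is_ideal_0[OF ideal] unfolding fps_coeffs_in_def L_def weierstrass_poly_def
    by (auto simp: coeff_eq_0 linorder_neq_iff)
  have W_nth: "W $ j = - (L * W) $ (j + n)" for j
    using high[of "j + n"] unfolding L_def
    by (simp add: algebra_simps fps_X_power_mult_right_nth)
  have "fps_coeffs_in (ideal_pow P m) W" for m
  proof (induction m)
    case (Suc m)
    from fps_coeffs_in_mult_ideal_pow_Suc[OF L this] show ?case
      unfolding fps_coeffs_in_def W_nth[of _] by (simp add: is_ideal_uminus[OF is_ideal_ideal_pow])
  qed (simp add: fps_coeffs_in_def)
  then show "W = 0"
    by (intro fps_ext) (simp add: fps_coeffs_in_def eq_0_if_in_ideal_pows)
qed

lemma weierstrass_data_unique: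
  assumes "weierstrass_data P f n Q U" "weierstrass_data P f n Q' U'"
  shows "Q' = Q" "U' = U"
proof -
  obtain V' where V': "U' * V' = 1"
    using assms(2) unfolding weierstrass_data_def by blast
  have Q: "weierstrass_poly P n Q" "weierstrass_poly P n Q'"
    using assms unfolding weierstrass_data_iff by auto
  define W where "W = V' * U - 1"
  have "V' * U * fps_of_poly Q = V' * (U' * fps_of_poly Q')"
    using assms unfolding weierstrass_data_iff by (simp add: mult.assoc)
  also have "\<dots> = fps_of_poly Q'"
    using V' by (metis mult.assoc mult.commute mult_1_left)
  finally have W: "W * fps_of_poly Q = fps_of_poly (Q' - Q)"
    unfolding W_def by (simp add: left_diff_distrib fps_of_poly_diff)
  have "W = 0"
  proof (rule fps_eq_0_if_mult_vanishes_from_degree[OF Q(1)])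
    fix j assume "n \<le> j"
    moreover have "degree Q = n" "degree Q' = n" "coeff Q n = 1" "coeff Q' n = 1"
      using Q unfolding weierstrass_poly_def by auto
    ultimately show "(W * fps_of_poly Q) $ j = 0"
      unfolding W by (cases "j = n") (simp_all add: coeff_eq_0)
  qed
  then show "Q' = Q"
    using W by simp
  from \<open>W = 0\<close> have "V' * U = 1" unfolding W_def by simp
  then show "U' = U"
    by (metis V' mult.assoc mult_1_left mult_1_right)
qed

lemma contraction_has_fixpoint:
  fixes T :: "'a fps \<Rightarrow> 'a fps"
  assumes contracting: "\<And>m V V'. fps_coeffs_in (ideal_pow P m) (V - V') \<Longrightarrow>
      fps_coeffs_in (ideal_pow P (Suc m)) (T V - T V')"
    and nonexpanding: "\<And>i V V'. fps_coeffs_in (F i) (V - V') \<Longrightarrow>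
      fps_coeffs_in (F i) (T V - T V')"
  obtains V where "T V = V"
proof -
  define S where "S m = (T ^^ m) 0" for m
  have "fps_coeffs_in (ideal_pow P m) (S (Suc m) - S m)" for m
    by (induction m) (simp_all add: S_def contracting, simp add: fps_coeffs_in_def)
  then have "\<exists>a. \<forall>i m. ideal_pow P m \<subseteq> F i \<longrightarrow> a - S m $ j \<in> F i" for j
    by (intro limit_exists) (simp add: fps_coeffs_in_def)
  then obtain lim where lim: "\<And>j i m. ideal_pow P m \<subseteq> F i \<Longrightarrow> lim j - S m $ j \<in> F i"
    by metis
  define V where "V = Abs_fps lim"
  have V: "fps_coeffs_in (F i) (V - S m)" if "ideal_pow P m \<subseteq> F i" for i m
    using lim that unfolding fps_coeffs_in_def V_def by simp
  have "T V = V"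
  proof (rule fps_ext)
    fix j
    have "(T V - V) $ j = 0"
    proof (rule eq_0_if_in_F)
      fix i
      obtain m where m: "ideal_pow P m \<subseteq> F i" by (rule ideal_pow_subset_F)
      then have m': "ideal_pow P (Suc m) \<subseteq> F i" using ideal_pow_Suc_subset by blast
      have "T V - V = (T V - T (S m)) + - (V - S (Suc m))" by (simp add: S_def)
      moreover have "fps_coeffs_in (F i) \<dots>"
        by (intro fps_coeffs_in_add fps_coeffs_in_uminus is_ideal_F nonexpanding V m m')
      ultimately show "(T V - V) $ j \<in> F i" by (simp add: fps_coeffs_in_def)
    qed
    then show "T V $ j = V $ j" by simp
  qed
  then show thesis by (rule that)
qed

lemma weierstrass_multiplier_exists:
  assumes L: "fps_coeffs_in P L" and H: "H dvd 1"
  obtains V where "H * V = 1 - fps_shift n (L * V)" and "V dvd 1"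
proof -
  from H obtain Hi where Hi: "1 = H * Hi" by (rule dvdE)
  define T where "T V = Hi * (1 - fps_shift n (L * V))" for V
  have T_diff: "T V - T V' = - (Hi * fps_shift n (L * (V - V')))" for V V'
    unfolding T_def by (simp add: algebra_simps fps_shift_diff)
  obtain V where "T V = V"
  proof (rule contraction_has_fixpoint)
    show "fps_coeffs_in (ideal_pow P (Suc m)) (T V - T V')"
      if "fps_coeffs_in (ideal_pow P m) (V - V')" for m V V'
      unfolding T_diff
      by (intro fps_coeffs_in_uminus fps_coeffs_in_mult_left fps_coeffs_in_shift is_ideal_ideal_pow
          fps_coeffs_in_mult_ideal_pow_Suc[OF L that])
    show "fps_coeffs_in (F i) (T V - T V')" if "fps_coeffs_in (F i) (V - V')" for i V V'
      unfolding T_diff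
      by (intro fps_coeffs_in_uminus fps_coeffs_in_mult_left fps_coeffs_in_shift is_ideal_F that)
  qed
  then have "H * V = (H * Hi) * (1 - fps_shift n (L * V))"
    unfolding T_def by (metis mult.assoc)
  then have HV: "H * V = 1 - fps_shift n (L * V)"
    by (simp flip: Hi)
  have "H $ 0 * V $ 0 = 1 + - ((L * V) $ n)"
    using arg_cong[OF HV, of "\<lambda>W. W $ 0"] by simp
  moreover have "fps_coeffs_in P (L * V)"
    using fps_coeffs_in_mult_left[OF ideal L, of V] by (simp add: mult.commute)
  then have "- ((L * V) $ n) \<in> P"
    unfolding fps_coeffs_in_def by (simp add: is_ideal_uminus[OF ideal])
  then have "(1 + - ((L * V) $ n)) dvd 1"
    by (rule is_unit_one_plus)
  ultimately have "V dvd 1"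
    unfolding fps_is_unit_iff_nth_0 by (metis dvd_mult_right)
  with HV show thesis by (rule that)
qed

text \<open>For \<open>f = L + X\<^sup>n H\<close> the product \<open>f V\<close> agrees with \<open>X\<^sup>n\<close> from degree \<open>n\<close> on
  exactly when \<open>H V = 1 - shift\<^sub>n (L V)\<close>.\<close>
lemma weierstrass_data_exists:
  assumes distinguished: "p_distinguished P f n"
  obtains Q U where "weierstrass_data P f n Q U"
proof -
  define L where "L = Abs_fps (\<lambda>j. if j < n then coeff f j else 0)"
  define H where "H = fps_shift n (fps_of_poly f)"
  have f_split: "fps_of_poly f = L + fps_X ^ n * H"
    by (rule fps_ext) (simp add: L_def H_def fps_X_power_mult_nth)
  have L: "fps_coeffs_in P L"
    using distinguished is_ideal_0[OF ideal]
    unfolding fps_coeffs_in_def L_def p_distinguished_def by auto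
  have "H dvd 1"
    using distinguished is_unit_if_unit_mod
    unfolding fps_is_unit_iff_nth_0 p_distinguished_def H_def by simp
  then obtain V where HV: "H * V = 1 - fps_shift n (L * V)" and "V dvd 1"
    by (rule weierstrass_multiplier_exists[OF L])
  have LV: "fps_coeffs_in P (L * V)"
    using fps_coeffs_in_mult_left[OF ideal L, of V] by (simp add: mult.commute)
  define G where "G = fps_of_poly f * V"
  have G: "G = L * V + fps_X ^ n * (1 - fps_shift n (L * V))"
    unfolding G_def f_split HV[symmetric] by (simp add: algebra_simps)
  have low: "G $ j \<in> P" if "j < n" for j
    using LV that unfolding G fps_coeffs_in_def by (simp add: fps_X_power_mult_nth)
  have high: "G $ j = (if j = n then 1 else 0)" if "n \<le> j" for j
    using that unfolding G by (simp add: fps_X_power_mult_nth)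
  from \<open>V dvd 1\<close> obtain U where U: "1 = V * U" by (rule dvdE)
  have "U * G = fps_of_poly f * (V * U)"
    unfolding G_def by (simp add: ac_simps)
  then have "fps_of_poly f = U * G"
    by (simp flip: U)
  moreover have "U dvd 1"
    using U dvd_triv_right by metis
  ultimately have "weierstrass_data P f n (truncate_fps (Suc n) G) U"
    using fps_eq_weierstrass_poly[OF low high] by (simp add: weierstrass_data_iff)
  then show thesis by (rule that)
qed

lemma weierstrass_data_WP:
  assumes "p_distinguished P f n"
  shows "weierstrass_data P f n (WP_P P f n) (WP_U P f n)"
proof -
  obtain Q U where wd: "weierstrass_data P f n Q U"
    using weierstrass_data_exists[OF assms] .
  have "WP_P P f n = Q"
    unfolding WP_P_def by (rule the_equality) (use wd weierstrass_data_unique(1) in blast)+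
  moreover have "WP_U P f n = U"
    unfolding WP_U_def by (rule the_equality) (use wd weierstrass_data_unique(2) in blast)+
  ultimately show ?thesis using wd by simp
qed

lemma weierstrass_data_factor:
  assumes wd: "weierstrass_data P f n Q U" and f: "f = A * B" and B: "coeff B 0 dvd 1"
  obtains q where "A = q * Q" "U = fps_of_poly (q * B)"
proof -
  have Q: "weierstrass_poly P n Q" and fU: "fps_of_poly f = U * fps_of_poly Q"
    using wd unfolding weierstrass_data_iff by auto
  obtain Bi where Bi: "fps_of_poly B * Bi = 1"
    using B fps_is_unit_iff_nth_0[of "fps_of_poly B"] by (auto elim: dvdE)
  obtain q r where qr: "pseudo_divmod A Q = (q, r)" by fastforce
  have Q_monic: "Q \<noteq> 0" "degree Q = n" "coeff Q n = 1"
    using Q unfolding weierstrass_poly_def by auto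
  then have A: "A = Q * q + r" and r: "r = 0 \<or> degree r < n"
    using pseudo_divmod[OF _ qr] by simp_all
  have "fps_of_poly A = fps_of_poly A * (fps_of_poly B * Bi)" using Bi by simp
  also have "\<dots> = Bi * U * fps_of_poly Q"
    using fU f by (simp add: fps_of_poly_mult algebra_simps)
  finally have "(Bi * U - fps_of_poly q) * fps_of_poly Q = fps_of_poly r"
    by (subst (asm) A) (simp add: algebra_simps fps_of_poly_add fps_of_poly_mult)
  moreover have "Bi * U - fps_of_poly q = 0"
    by (rule fps_eq_0_if_mult_vanishes_from_degree[OF Q])
       (use calculation r in \<open>auto simp: coeff_eq_0\<close>)
  ultimately have "r = 0" and q: "fps_of_poly q = Bi * U"
    by simp_all
  show thesis
  proof (rule that)
    show "A = q * Q" using A \<open>r = 0\<close> by (simp add: mult.commute)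
    have "fps_of_poly (q * B) = U * (fps_of_poly B * Bi)"
      by (simp add: fps_of_poly_mult q ac_simps)
    with Bi show "U = fps_of_poly (q * B)" by simp
  qed
qed

end

section \<open>Prime factorizations in \<open>R[X]\<close>\<close>

lemma is_prime_factorization_ConsI:
  "c dvd 1 \<Longrightarrow> (\<forall>x\<in>set xs. prime_elem x) \<Longrightarrow> is_prime_factorization (c * prod_list xs) (c # xs)"
  by (simp add: is_prime_factorization_def)

lemma is_unit_coeff_0_prod_list:
  "(\<And>p. p \<in> set ps \<Longrightarrow> coeff p 0 dvd 1) \<Longrightarrow> coeff (prod_list ps) 0 dvd 1"
proof (induction ps)
  case (Cons p ps)
  then have "coeff p 0 * coeff (prod_list ps) 0 dvd 1 * 1" by (intro mult_dvd_mono) auto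
  then show ?case by (simp add: coeff_mult_0)
qed simp

lemma is_unit_if_coeff_0_unit_dvd_prod_primes:
  fixes q :: "'a::idom poly"
  assumes "\<forall>p\<in>set ps. prime_elem p \<and> \<not> coeff p 0 dvd 1"
    and "q dvd prod_list ps" and "coeff q 0 dvd 1"
  shows "q dvd 1"
  using assms
proof (induction ps arbitrary: q)
  case (Cons p ps)
  obtain s where s: "p * prod_list ps = q * s" using Cons.prems(2) by auto
  have p: "prime_elem p" "\<not> coeff p 0 dvd 1" using Cons.prems(1) by auto
  have "\<not> p dvd q"
  proof
    assume "p dvd q"
    then have "coeff p 0 dvd coeff q 0" by (auto simp: coeff_mult_0)
    with Cons.prems(3) p(2) show False by (blast intro: dvd_trans)
  qed
  moreover have "p dvd q * s" by (metis s dvd_triv_left)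
  ultimately obtain s' where "s = p * s'"
    using prime_elem_dvd_mult_iff[OF p(1)] by blast
  with s p(1) have "prod_list ps = q * s'"
    by (simp add: prime_elem_not_zeroI mult.left_commute)
  then show ?case using Cons.IH Cons.prems(1,3) by auto
qed simp

lemma weierstrass_data_prime_factor:
  fixes P :: "'a::idom set"
  assumes "complete_filtration P F" and wd: "weierstrass_data P f n Q U"
    and f: "f = prod_list ps * B" and B: "coeff B 0 dvd 1"
    and ps: "\<forall>p\<in>set ps. prime_elem p \<and> \<not> coeff p 0 dvd 1"
  obtains c where "c dvd 1" "prod_list ps = smult c Q" "U = fps_of_poly (smult c B)"
proof -
  interpret complete_filtration P F by fact
  obtain q where q: "prod_list ps = q * Q" "U = fps_of_poly (q * B)"
    using weierstrass_data_factor[OF wd f B] .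
  have "coeff q 0 * coeff B 0 dvd 1"
    using wd q(2) unfolding weierstrass_data_iff fps_is_unit_iff_nth_0 by (simp add: coeff_mult_0)
  then have "coeff q 0 dvd 1" by (rule dvd_mult_left)
  then have "q dvd 1"
    using is_unit_if_coeff_0_unit_dvd_prod_primes[OF ps] q(1) by simp
  then obtain c where "q = [:c:]" "c dvd 1" by (auto simp: is_unit_poly_iff)
  with q show thesis using that by simp
qed

lemma is_prime_factorization_take_drop:
  assumes "is_prime_factorization f \<Phi>"
  shows "f = prod_list (take k (tl \<Phi>)) * (\<Phi> ! 0 * prod_list (drop (Suc k) \<Phi>))"
    and "\<Phi> ! 0 dvd 1"
proof -
  obtain \<phi> \<Phi>' where "\<Phi> = \<phi> # \<Phi>'"
    using assms unfolding is_prime_factorization_def by (auto simp: neq_Nil_conv)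
  with assms show "f = prod_list (take k (tl \<Phi>)) * (\<Phi> ! 0 * prod_list (drop (Suc k) \<Phi>))"
    unfolding is_prime_factorization_def
    by (metis append_take_drop_id drop_Suc_Cons list.sel(3) nth_Cons_0 prod_list.Cons
        prod_list.append mult.left_commute)
  show "\<Phi> ! 0 dvd 1"
    using assms \<open>\<Phi> = \<phi> # \<Phi>'\<close> unfolding is_prime_factorization_def by simp
qed

lemma prime_factorization_split:
  fixes \<Phi> :: "'a::idom poly list"
  assumes "is_prime_factorization f \<Phi>" "length \<Phi> = Suc l"
    and "\<forall>i. 0 < i \<and> i \<le> l \<longrightarrow> (coeff (\<Phi> ! i) 0 dvd 1 \<longleftrightarrow> k < i)"
  shows "\<forall>p\<in>set (take k (tl \<Phi>)). prime_elem p \<and> \<not> coeff p 0 dvd 1"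
    and "\<forall>p\<in>set (drop k (tl \<Phi>)). prime_elem p \<and> coeff p 0 dvd 1"
proof -
  have prime: "prime_elem p" if "p \<in> set (tl \<Phi>)" for p
    using assms(1) that unfolding is_prime_factorization_def by blast
  have index: "p = \<Phi> ! Suc j \<and> Suc j \<le> l" if "j < length (tl \<Phi>)" "p = tl \<Phi> ! j" for p j
    using assms(2) that by (cases \<Phi>) auto
  show "\<forall>p\<in>set (take k (tl \<Phi>)). prime_elem p \<and> \<not> coeff p 0 dvd 1"
  proof
    fix p assume p: "p \<in> set (take k (tl \<Phi>))"
    then obtain j where "j < k" "j < length (tl \<Phi>)" "p = tl \<Phi> ! j"
      by (auto simp: in_set_conv_nth)
    with index assms(3) show "prime_elem p \<and> \<not> coeff p 0 dvd 1"
      using prime[OF in_set_takeD[OF p]] by fastforce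
  qed
  show "\<forall>p\<in>set (drop k (tl \<Phi>)). prime_elem p \<and> coeff p 0 dvd 1"
  proof
    fix p assume p: "p \<in> set (drop k (tl \<Phi>))"
    then obtain i where "i < length (drop k (tl \<Phi>))" "p = drop k (tl \<Phi>) ! i"
      unfolding in_set_conv_nth by blast
    then have "k + i < length (tl \<Phi>)" "p = tl \<Phi> ! (k + i)"
      by auto
    with index assms(3) show "prime_elem p \<and> coeff p 0 dvd 1"
      using prime[OF in_set_dropD[OF p]] by fastforce
  qed
qed

theorem proposition5p3:
  fixes P :: "'a::{factorial_semiring,idom} set"
    and F :: "nat \<Rightarrow> 'a set"
    and f :: "'a poly"
    and n :: nat
    and \<Phi> :: "'a poly list"
    and l k :: nat
    and u :: 'a
  assumes "prime_ideal P"
    and "p_filtration P F"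
    and "complete_wrt F"
    and "p_distinguished P f n"
    and "coeff f 0 \<noteq> 0"
    and "is_prime_factorization f \<Phi>"
    and "length \<Phi> = Suc l"
    and "k \<le> l"
    and "\<forall>i. 0 < i \<and> i \<le> l \<longrightarrow> (is_unit (coeff (\<Phi> ! i) 0) \<longleftrightarrow> k < i)"
    and "u = lead_coeff (prod_list (take k (tl \<Phi>)))"
  shows "is_unit u \<and>
         is_prime_factorization (WP_P P f n) ([:1 div u:] # take k (tl \<Phi>)) \<and>
         (\<exists>g. WP_U P f n = fps_of_poly g \<and>
              is_prime_factorization g (smult u (\<Phi> ! 0) # drop (Suc k) \<Phi>))"
proof -
  have filtration: "complete_filtration P F"
    using assms(1-3) by unfold_locales (simp add: prime_ideal_def)
  note wd = complete_filtration.weierstrass_data_WP[OF filtration assms(4)]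
  note split = prime_factorization_split[OF assms(6,7,9)]
  define B where "B = \<Phi> ! 0 * prod_list (drop (Suc k) \<Phi>)"
  have "coeff B 0 dvd 1"
    using is_prime_factorization_take_drop(2)[OF assms(6)] split(2)
      is_unit_coeff_0_prod_list[of "drop k (tl \<Phi>)"]
    unfolding B_def drop_Suc by (auto simp: coeff_mult_0 is_unit_poly_iff)
  then obtain c where c: "is_unit c" "prod_list (take k (tl \<Phi>)) = smult c (WP_P P f n)"
      "WP_U P f n = fps_of_poly (smult c B)"
    using weierstrass_data_prime_factor[OF filtration wd _ _ split(1)]
      is_prime_factorization_take_drop(1)[OF assms(6)] unfolding B_def by blast
  moreover have "lead_coeff (WP_P P f n) = 1"
    using wd unfolding weierstrass_data_def by blast
  ultimately have u: "u = c" "is_unit u"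
    using assms(10) by (auto simp: lead_coeff_smult)
  have "[:u:] * \<Phi> ! 0 dvd 1 * 1"
    using u is_prime_factorization_take_drop(2)[OF assms(6)]
    by (intro mult_dvd_mono) (simp_all add: is_unit_const_poly_iff)
  then have "is_prime_factorization (smult u B) (smult u (\<Phi> ! 0) # drop (Suc k) \<Phi>)"
    using is_prime_factorization_ConsI[of "smult u (\<Phi> ! 0)" "drop (Suc k) \<Phi>"] split(2)
    unfolding B_def drop_Suc by simp
  moreover have "is_prime_factorization (WP_P P f n) ([:1 div u:] # take k (tl \<Phi>))"
    using is_prime_factorization_ConsI[of "[:1 div u:]" "take k (tl \<Phi>)"] split(1) c(2) u
    by (simp add: is_unit_const_poly_iff)
  ultimately show ?thesis
    using c(3) u by blast
qed

end
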